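(* Let $n\ge 3$, let $c^1,\dots,c^n$ be pairwise distinct constants, and let $u(x^1,\dots,x^n)$ be smooth with all first derivatives $u_i$ nowhere zero. Suppose that for all pairwise distinct $i,j,k$, $$(c^i-c^j)u_ku_{ij}+(c^k-c^i)u_ju_{ik}+(c^j-c^k)u_iu_{jk}=0\quad\text{and}\quad u_{ijk}=\tfrac12\Big(\frac{u_{ij}u_{ik}}{u_i}+\frac{u_{ij}u_{jk}}{u_j}+\frac{u_{ik}u_{jk}}{u_k}\Big).$$ Then for all $i\ne j$ the planar equation $$\Big(\frac{u_{ij}^2}{u_i^2u_j}\Big)_i+\Big(\frac{u_{ij}^2}{u_iu_j^2}\Big)_j+\Big(\frac{2u_{ij}}{u_iu_j}\Big)_{ij}=0$$ holds, where outer subscripts denote partial derivatives with respect to $x^i$, $x^j$.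
   Context: Subscripts on $u$ denote partial derivatives with respect to the independent variables, e.g. $u_{ij}=\partial^2u/\partial x^i\partial x^j$. The planar equation is the first group of multiform Euler-Lagrange equations of the Lagrangian 2-form $\mathcal{L}=\sum_{i<j}(c^i-c^j)\frac{u_{ij}^2}{u_iu_j}\,\mathrm{d}x^i\wedge\mathrm{d}x^j$. *)

theory Defs
  imports "HOL-Analysis.Analysis"
begin

definition pd :: "'n::finite \<Rightarrow> (real^'n \<Rightarrow> real) \<Rightarrow> real^'n \<Rightarrow> real" where
  "pd i f x = deriv (\<lambda>t. f (x + t *\<^sub>R axis i 1)) 0"

fun iter_pd :: "'n::finite list \<Rightarrow> (real^'n \<Rightarrow> real) \<Rightarrow> real^'n \<Rightarrow> real" where
  "iter_pd [] f = f"
| "iter_pd (i # is) f = pd i (iter_pd is f)"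

definition smooth :: "(real^'n::finite \<Rightarrow> real) \<Rightarrow> bool" where
  "smooth f \<longleftrightarrow> (\<forall>is x. iter_pd is f differentiable (at x))"

end

theory Submission
  imports Defs
begin

text \<open>Fix a third index \<open>k\<close>. Differentiating the three-term relation for \<open>(i, j, k)\<close> in
  \<open>x\<^sup>i\<close>, in \<open>x\<^sup>j\<close> and in both, and the expression for \<open>u\<^sub>i\<^sub>j\<^sub>k\<close> in \<open>x\<^sup>i\<close> and in
  \<open>x\<^sup>j\<close>, gives a linear system from which the unknown derivatives \<open>u\<^sub>i\<^sub>i\<^sub>k\<close>,
  \<open>u\<^sub>j\<^sub>j\<^sub>k\<close>, \<open>u\<^sub>i\<^sub>i\<^sub>j\<^sub>k\<close>, \<open>u\<^sub>i\<^sub>j\<^sub>j\<^sub>k\<close> can be eliminated (only \<open>c\<^sup>i \<noteq> c\<^sup>j\<close> is needed).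
  What remains expresses \<open>u\<^sub>i\<^sub>i\<^sub>j\<^sub>j\<close> through derivatives of order at most three in
  \<open>x\<^sup>i, x\<^sup>j\<close>, and substituting it into the expanded planar equation makes it vanish
  identically. The elimination becomes transparent after dividing every derivative \<open>u\<^sub>I\<close> by the
  product of the \<open>u\<^sub>m\<close> over the indices \<open>m\<close> in \<open>I\<close>. Equality of mixed partials (Schwarz)
  is proved from the mean value theorem.\<close>

lemma has_real_derivative_along_line:
  fixes f :: "'a::real_normed_vector \<Rightarrow> real"
  assumes "f differentiable (at (y + t0 *\<^sub>R v))"
  shows "((\<lambda>t. f (y + t *\<^sub>R v)) has_real_derivative frechet_derivative f (at (y + t0 *\<^sub>R v)) v) (at t0)"
proof -
  let ?F = "frechet_derivative f (at (y + t0 *\<^sub>R v))"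
  have F: "(f has_derivative ?F) (at (y + t0 *\<^sub>R v))"
    using assms frechet_derivative_works by blast
  have "((\<lambda>t. y + t *\<^sub>R v) has_derivative (\<lambda>t. t *\<^sub>R v)) (at t0)"
    by (auto intro!: derivative_eq_intros)
  from diff_chain_at[OF this F]
  have "((\<lambda>t. f (y + t *\<^sub>R v)) has_derivative (\<lambda>t. ?F (t *\<^sub>R v))) (at t0)"
    by (simp add: o_def)
  moreover have "(\<lambda>t. ?F (t *\<^sub>R v)) = (\<lambda>t. ?F v * t)"
    using linear_scale[OF has_derivative_linear[OF F]] by (auto simp: mult.commute)
  ultimately show ?thesis
    by (simp add: has_field_derivative_def)
qed

lemma pd_eq_frechet_derivative:
  assumes "f differentiable (at y)"
  shows "pd i f y = frechet_derivative f (at y) (axis i 1)"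
  unfolding pd_def using has_real_derivative_along_line[of f y 0] assms
  by (simp add: DERIV_imp_deriv)

lemma has_real_derivative_pd:
  assumes "f differentiable (at (y + t0 *\<^sub>R axis i 1))"
  shows "((\<lambda>t. f (y + t *\<^sub>R axis i 1)) has_real_derivative pd i f (y + t0 *\<^sub>R axis i 1)) (at t0)"
  using has_real_derivative_along_line[OF assms] pd_eq_frechet_derivative[OF assms] by simp

lemma pd_eqI:
  assumes "((\<lambda>t. f (x + t *\<^sub>R axis i 1)) has_real_derivative D) (at 0)"
  shows "pd i f x = D"
  unfolding pd_def using assms by (rule DERIV_imp_deriv)

lemma pd_const: "pd i (\<lambda>_. a) x = 0"
  by (rule pd_eqI) simp

lemma second_difference_mean_value:
  fixes f :: "real^'n::finite \<Rightarrow> real"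
  assumes df: "\<And>z. f differentiable (at z)" and dfi: "\<And>z. pd i f differentiable (at z)"
    and h: "h > 0"
  obtains \<xi> where "dist \<xi> x < 2 * h"
    "f (x + h *\<^sub>R axis i 1 + h *\<^sub>R axis j 1) - f (x + h *\<^sub>R axis i 1) - f (x + h *\<^sub>R axis j 1) + f x
      = h * h * pd j (pd i f) \<xi>"
proof -
  define e :: "real^'n" where "e = axis i 1"
  define d :: "real^'n" where "d = axis j 1"
  define g where "g s = f (x + h *\<^sub>R d + s *\<^sub>R e) - f (x + s *\<^sub>R e)" for s
  define g' where "g' s = pd i f (x + h *\<^sub>R d + s *\<^sub>R e) - pd i f (x + s *\<^sub>R e)" for s
  have "DERIV g s :> g' s" for s
    unfolding g_def g'_def e_def by (intro DERIV_diff has_real_derivative_pd df)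
  then obtain s where s: "0 < s" "s < h" and gs: "g h - g 0 = h * g' s"
    using MVT2[OF h, of g g'] by auto
  define k where "k \<tau> = pd i f (x + s *\<^sub>R e + \<tau> *\<^sub>R d)" for \<tau>
  define k' where "k' \<tau> = pd j (pd i f) (x + s *\<^sub>R e + \<tau> *\<^sub>R d)" for \<tau>
  have "DERIV k \<tau> :> k' \<tau>" for \<tau>
    unfolding k_def k'_def d_def by (intro has_real_derivative_pd dfi)
  then obtain \<tau> where \<tau>: "0 < \<tau>" "\<tau> < h" and k\<tau>: "k h - k 0 = h * k' \<tau>"
    using MVT2[OF h, of k k'] by auto
  have "dist (x + s *\<^sub>R e + \<tau> *\<^sub>R d) x \<le> norm (s *\<^sub>R e) + norm (\<tau> *\<^sub>R d)"
    using norm_triangle_ineq[of "s *\<^sub>R e" "\<tau> *\<^sub>R d"] by (simp add: dist_norm)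
  also have "\<dots> < 2 * h"
    using s \<tau> by (simp add: e_def d_def)
  finally have "dist (x + s *\<^sub>R e + \<tau> *\<^sub>R d) x < 2 * h" .
  moreover have "g' s = k h - k 0"
    unfolding g'_def k_def by (simp add: algebra_simps)
  ultimately show ?thesis
    using that[of "x + s *\<^sub>R e + \<tau> *\<^sub>R d"] gs k\<tau>
    unfolding g_def k'_def e_def d_def by (simp add: algebra_simps)
qed

lemma pd_commute:
  fixes f :: "real^'n::finite \<Rightarrow> real"
  assumes df: "\<And>z. f differentiable (at z)"
    and dfi: "\<And>z. pd i f differentiable (at z)" and dfj: "\<And>z. pd j f differentiable (at z)"
    and cont_ji: "continuous (at x) (pd j (pd i f))" and cont_ij: "continuous (at x) (pd i (pd j f))"
  shows "pd i (pd j f) x = pd j (pd i f) x"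
proof (rule ccontr)
  \<comment> \<open>Both mixed partials are values of the same second difference quotient near \<open>x\<close>.\<close>
  assume ne: "pd i (pd j f) x \<noteq> pd j (pd i f) x"
  define \<epsilon> where "\<epsilon> = \<bar>pd i (pd j f) x - pd j (pd i f) x\<bar> / 2"
  have "\<epsilon> > 0" using ne by (simp add: \<epsilon>_def)
  then obtain d1 d2 where d: "d1 > 0" "d2 > 0"
    and d1: "\<And>y. dist y x < d1 \<Longrightarrow> \<bar>pd j (pd i f) y - pd j (pd i f) x\<bar> < \<epsilon>"
    and d2: "\<And>y. dist y x < d2 \<Longrightarrow> \<bar>pd i (pd j f) y - pd i (pd j f) x\<bar> < \<epsilon>"
    using cont_ji cont_ij unfolding continuous_at_eps_delta dist_real_def by metis
  define h where "h = min d1 d2 / 2"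
  have h: "h > 0" using d by (simp add: h_def)
  obtain \<xi>1 where \<xi>1: "dist \<xi>1 x < 2 * h"
    "f (x + h *\<^sub>R axis i 1 + h *\<^sub>R axis j 1) - f (x + h *\<^sub>R axis i 1) - f (x + h *\<^sub>R axis j 1) + f x
      = h * h * pd j (pd i f) \<xi>1"
    using second_difference_mean_value[OF df dfi h] .
  obtain \<xi>2 where \<xi>2: "dist \<xi>2 x < 2 * h"
    "f (x + h *\<^sub>R axis j 1 + h *\<^sub>R axis i 1) - f (x + h *\<^sub>R axis j 1) - f (x + h *\<^sub>R axis i 1) + f x
      = h * h * pd i (pd j f) \<xi>2"
    using second_difference_mean_value[OF df dfj h] .
  have "pd j (pd i f) \<xi>1 = pd i (pd j f) \<xi>2"
    using \<xi>1(2) \<xi>2(2) h by (simp add: algebra_simps)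
  moreover have "\<bar>pd j (pd i f) \<xi>1 - pd j (pd i f) x\<bar> < \<epsilon>" "\<bar>pd i (pd j f) \<xi>2 - pd i (pd j f) x\<bar> < \<epsilon>"
    using d1 d2 \<xi>1(1) \<xi>2(1) by (auto simp: h_def)
  ultimately show False
    unfolding \<epsilon>_def by (auto simp: abs_if split: if_splits)
qed

lemma smooth_differentiable_iter_pd: "smooth u \<Longrightarrow> iter_pd is u differentiable (at z)"
  by (simp add: smooth_def)

lemma smooth_pd_commute:
  assumes "smooth u"
  shows "pd i (pd j (iter_pd is u)) = pd j (pd i (iter_pd is u))"
proof
  fix x
  note diff = smooth_differentiable_iter_pd[OF assms]
  from diff[of "is"] diff[of "i # is"] diff[of "j # is"] diff[of "j # i # is"] diff[of "i # j # is"]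
  show "pd i (pd j (iter_pd is u)) x = pd j (pd i (iter_pd is u)) x"
    by (intro pd_commute differentiable_imp_continuous_within) auto
qed

lemma smooth_has_real_derivative_pd:
  assumes "smooth u"
  shows "((\<lambda>t. u (y + t *\<^sub>R axis m 1)) has_real_derivative pd m u y) (at 0)"
    and "((\<lambda>t. pd a u (y + t *\<^sub>R axis m 1)) has_real_derivative pd m (pd a u) y) (at 0)"
    and "((\<lambda>t. pd a (pd b u) (y + t *\<^sub>R axis m 1)) has_real_derivative pd m (pd a (pd b u)) y) (at 0)"
    and "((\<lambda>t. pd a (pd b (pd c u)) (y + t *\<^sub>R axis m 1))
          has_real_derivative pd m (pd a (pd b (pd c u))) y) (at 0)"
  using has_real_derivative_pd[of _ y 0 m] smooth_differentiable_iter_pd[OF assms, of "[]"]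
    smooth_differentiable_iter_pd[OF assms, of "[a]"] smooth_differentiable_iter_pd[OF assms, of "[a, b]"]
    smooth_differentiable_iter_pd[OF assms, of "[a, b, c]"]
  by simp_all

lemma fourth_order_elimination_normalized:
  fixes a b c w x y al be si sj t zi zj ti tj v :: real
  assumes ab: "a \<noteq> b"
    and r1: "(a - b) * w + (c - a) * x + (b - c) * y = 0"
    and r2: "(a - b) * (x * w + si) + (c - a) * (w * x + zi) + (b - c) * (al * y + t) = 0"
    and r3: "(a - b) * (y * w + sj) + (c - a) * (be * x + t) + (b - c) * (w * y + zj) = 0"
    and t: "t = (w * x + w * y + x * y) / 2"
    and ti: "ti = (si * x + w * zi - w * x * al + si * y + w * t - w * y * w + zi * y + x * t - x * y * x) / 2"
    and tj: "tj = (sj * x + w * t - w * x * w + sj * y + w * zj - w * y * be + t * y + x * zj - x * y * y) / 2"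
    and r7: "(a - b) * (t * w + x * sj + y * si + v) + (c - a) * (sj * x + w * t + be * zi + ti)
      + (b - c) * (si * y + al * zj + w * t + tj) = 0"
  shows "v = (w + be) * si + (w + al) * sj - w * (w * al + w * be + al * be)"
proof -
  have "(a - b) * (v - ((w + be) * si + (w + al) * sj - w * (w * al + w * be + al * be))) =
      ((a - b) * (t * w + x * sj + y * si + v) + (c - a) * (sj * x + w * t + be * zi + ti)
        + (b - c) * (si * y + al * zj + w * t + tj))
    - (be + (w + y) / 2) * ((a - b) * (x * w + si) + (c - a) * (w * x + zi) + (b - c) * (al * y + t))
    - (al + (w + x) / 2) * ((a - b) * (y * w + sj) + (c - a) * (be * x + t) + (b - c) * (w * y + zj))
    + (2 * al * be - si - sj + y * al + x * be + x * y + 2 * w * be + 2 * w * al) / 2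
      * ((a - b) * w + (c - a) * x + (b - c) * y)"
    unfolding ti tj t by (simp add: field_simps)
  also have "\<dots> = 0" unfolding r1 r2 r3 r7 by simp
  finally show ?thesis using ab by simp
qed

text \<open>Here \<open>p, q, r\<close> stand for \<open>u\<^sub>i, u\<^sub>j, u\<^sub>k\<close>; \<open>W, X, Y\<close> for \<open>u\<^sub>i\<^sub>j, u\<^sub>i\<^sub>k, u\<^sub>j\<^sub>k\<close>;
  \<open>A, B\<close> for \<open>u\<^sub>i\<^sub>i, u\<^sub>j\<^sub>j\<close>; \<open>Si, Sj\<close> for \<open>u\<^sub>i\<^sub>i\<^sub>j, u\<^sub>i\<^sub>j\<^sub>j\<close>; \<open>T\<close> for \<open>u\<^sub>i\<^sub>j\<^sub>k\<close>;
  \<open>Zi, Zj\<close> for \<open>u\<^sub>i\<^sub>i\<^sub>k, u\<^sub>j\<^sub>j\<^sub>k\<close>; \<open>Ti, Tj\<close> for \<open>u\<^sub>i\<^sub>i\<^sub>j\<^sub>k, u\<^sub>i\<^sub>j\<^sub>j\<^sub>k\<close> and \<open>V\<close> for \<open>u\<^sub>i\<^sub>i\<^sub>j\<^sub>j\<close>;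
  the hypotheses are the differentiated equations, and the normalized variables of the
  previous lemma are these divided by the corresponding products of \<open>p, q, r\<close>.\<close>

lemma fourth_order_elimination:
  fixes a b c p q r A B W X Y Si Sj T Zi Zj Ti Tj V :: real
  assumes nz: "p \<noteq> 0" "q \<noteq> 0" "r \<noteq> 0" and ab: "a \<noteq> b"
    and R1: "(a - b) * r * W + (c - a) * q * X + (b - c) * p * Y = 0"
    and R2: "(a - b) * (X * W + r * Si) + (c - a) * (W * X + q * Zi) + (b - c) * (A * Y + p * T) = 0"
    and R3: "(a - b) * (Y * W + r * Sj) + (c - a) * (B * X + q * T) + (b - c) * (W * Y + p * Zj) = 0"
    and T: "T = 1/2 * (W * X / p + W * Y / q + X * Y / r)"
    and Ti: "Ti = 1/2 * ((Si * X + W * Zi) / p - W * X * A / p^2 + (Si * Y + W * T) / q - W * Y * W / q^2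
        + (Zi * Y + X * T) / r - X * Y * X / r^2)"
    and Tj: "Tj = 1/2 * ((Sj * X + W * T) / p - W * X * W / p^2 + (Sj * Y + W * Zj) / q - W * Y * B / q^2
        + (T * Y + X * Zj) / r - X * Y * Y / r^2)"
    and R7: "(a - b) * (T * W + X * Sj + Y * Si + r * V) + (c - a) * (Sj * X + W * T + B * Zi + q * Ti)
      + (b - c) * (Si * Y + A * Zj + W * T + p * Tj) = 0"
  shows "V = (W / p + B / q) * Si + (W / q + A / p) * Sj - W^2 * A / p^2 - W^2 * B / q^2 - W * A * B / (p * q)"
proof -
  have scale: "e = 0" if "E = 0" "k \<noteq> 0" "e * k = E" for e k E :: real
    using that by simp
  have "V / (p^2 * q^2) = (W / (p * q) + B / q^2) * (Si / (p^2 * q)) + (W / (p * q) + A / p^2) * (Sj / (p * q^2))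
     - W / (p * q) * (W / (p * q) * (A / p^2) + W / (p * q) * (B / q^2) + A / p^2 * (B / q^2))" (is "?v = ?rhs")
  proof (rule fourth_order_elimination_normalized[OF ab, where x = "X / (p * r)" and y = "Y / (q * r)"
        and t = "T / (p * q * r)" and zi = "Zi / (p^2 * r)" and zj = "Zj / (q^2 * r)"
        and ti = "Ti / (p^2 * q * r)" and tj = "Tj / (p * q^2 * r)"])
    show "(a - b) * (W / (p * q)) + (c - a) * (X / (p * r)) + (b - c) * (Y / (q * r)) = 0"
      by (rule scale[OF R1, where k = "p * q * r"]) (use nz in \<open>simp_all add: field_simps\<close>)
    show "(a - b) * (X / (p * r) * (W / (p * q)) + Si / (p^2 * q)) + (c - a) * (W / (p * q) * (X / (p * r)) + Zi / (p^2 * r))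
        + (b - c) * (A / p^2 * (Y / (q * r)) + T / (p * q * r)) = 0"
      by (rule scale[OF R2, where k = "p^2 * q * r"]) (use nz in \<open>simp_all add: field_simps power2_eq_square\<close>)
    show "(a - b) * (Y / (q * r) * (W / (p * q)) + Sj / (p * q^2)) + (c - a) * (B / q^2 * (X / (p * r)) + T / (p * q * r))
        + (b - c) * (W / (p * q) * (Y / (q * r)) + Zj / (q^2 * r)) = 0"
      by (rule scale[OF R3, where k = "p * q^2 * r"]) (use nz in \<open>simp_all add: field_simps power2_eq_square\<close>)
    show "T / (p * q * r) = (W / (p * q) * (X / (p * r)) + W / (p * q) * (Y / (q * r)) + X / (p * r) * (Y / (q * r))) / 2"
      unfolding T using nz by (simp add: field_simps)
    show "Ti / (p^2 * q * r) = (Si / (p^2 * q) * (X / (p * r)) + W / (p * q) * (Zi / (p^2 * r)) - W / (p * q) * (X / (p * r)) * (A / p^2)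
       + Si / (p^2 * q) * (Y / (q * r)) + W / (p * q) * (T / (p * q * r)) - W / (p * q) * (Y / (q * r)) * (W / (p * q))
       + Zi / (p^2 * r) * (Y / (q * r)) + X / (p * r) * (T / (p * q * r)) - X / (p * r) * (Y / (q * r)) * (X / (p * r))) / 2"
      unfolding Ti using nz by (simp add: field_simps power2_eq_square)
    show "Tj / (p * q^2 * r) = (Sj / (p * q^2) * (X / (p * r)) + W / (p * q) * (T / (p * q * r)) - W / (p * q) * (X / (p * r)) * (W / (p * q))
       + Sj / (p * q^2) * (Y / (q * r)) + W / (p * q) * (Zj / (q^2 * r)) - W / (p * q) * (Y / (q * r)) * (B / q^2)
       + T / (p * q * r) * (Y / (q * r)) + X / (p * r) * (Zj / (q^2 * r)) - X / (p * r) * (Y / (q * r)) * (Y / (q * r))) / 2"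
      unfolding Tj using nz by (simp add: field_simps power2_eq_square)
    show "(a - b) * (T / (p * q * r) * (W / (p * q)) + X / (p * r) * (Sj / (p * q^2)) + Y / (q * r) * (Si / (p^2 * q)) + V / (p^2 * q^2))
        + (c - a) * (Sj / (p * q^2) * (X / (p * r)) + W / (p * q) * (T / (p * q * r)) + B / q^2 * (Zi / (p^2 * r)) + Ti / (p^2 * q * r))
        + (b - c) * (Si / (p^2 * q) * (Y / (q * r)) + A / p^2 * (Zj / (q^2 * r)) + W / (p * q) * (T / (p * q * r)) + Tj / (p * q^2 * r)) = 0"
      by (rule scale[OF R7, where k = "p^2 * q^2 * r"]) (use nz in \<open>simp_all add: field_simps power2_eq_square\<close>)
  qed
  then have "V = ?rhs * (p^2 * q^2)"
    using nz by (simp add: nonzero_divide_eq_eq)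
  also have "\<dots> = (W / p + B / q) * Si + (W / q + A / p) * Sj - W^2 * A / p^2 - W^2 * B / q^2 - W * A * B / (p * q)"
    using nz by (simp add: field_simps power2_eq_square)
  finally show ?thesis .
qed

locale planar_triple =
  fixes u :: "real^'n::finite \<Rightarrow> real" and c :: "'n \<Rightarrow> real" and i j k :: 'n
  assumes smooth: "smooth u"
    and nonzero: "\<And>y. pd i u y \<noteq> 0" "\<And>y. pd j u y \<noteq> 0" "\<And>y. pd k u y \<noteq> 0"
    and c_ij: "c i \<noteq> c j"
    and three_term: "\<And>y. (c i - c j) * pd k u y * pd i (pd j u) y
      + (c k - c i) * pd j u y * pd i (pd k u) y + (c j - c k) * pd i u y * pd j (pd k u) y = 0"
    and third_derivative: "\<And>y. pd i (pd j (pd k u)) y = 1/2 *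
      (pd i (pd j u) y * pd i (pd k u) y / pd i u y + pd i (pd j u) y * pd j (pd k u) y / pd j u y
     + pd i (pd k u) y * pd j (pd k u) y / pd k u y)"
begin

lemmas line_derivatives = smooth_has_real_derivative_pd[OF smooth]

lemma pd_swap:
  "pd a (pd b u) = pd b (pd a u)"
  "pd a (pd b (pd m u)) = pd b (pd a (pd m u))"
  "pd a (pd b (pd m (pd n u))) = pd b (pd a (pd m (pd n u)))"
  using smooth_pd_commute[OF smooth, of a b "[]"] smooth_pd_commute[OF smooth, of a b "[m]"]
    smooth_pd_commute[OF smooth, of a b "[m, n]"]
  by simp_all

lemma three_term_pd_i:
  "(c i - c j) * (pd i (pd k u) y * pd i (pd j u) y + pd k u y * pd i (pd i (pd j u)) y)
 + (c k - c i) * (pd i (pd j u) y * pd i (pd k u) y + pd j u y * pd i (pd i (pd k u)) y)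
 + (c j - c k) * (pd i (pd i u) y * pd j (pd k u) y + pd i u y * pd i (pd j (pd k u)) y) = 0"
  (is "?D = 0")
proof -
  have "pd i (\<lambda>y. (c i - c j) * pd k u y * pd i (pd j u) y
      + (c k - c i) * pd j u y * pd i (pd k u) y + (c j - c k) * pd i u y * pd j (pd k u) y) y = ?D"
    apply (rule pd_eqI)
    apply (rule derivative_eq_intros line_derivatives | simp)+
    by (simp add: algebra_simps)
  then show ?thesis
    unfolding three_term pd_const by simp
qed

lemma three_term_pd_j:
  "(c i - c j) * (pd j (pd k u) y * pd i (pd j u) y + pd k u y * pd j (pd i (pd j u)) y)
 + (c k - c i) * (pd j (pd j u) y * pd i (pd k u) y + pd j u y * pd i (pd j (pd k u)) y)
 + (c j - c k) * (pd i (pd j u) y * pd j (pd k u) y + pd i u y * pd j (pd j (pd k u)) y) = 0"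
  (is "?D = 0")
proof -
  have "pd j (\<lambda>y. (c i - c j) * pd k u y * pd i (pd j u) y
      + (c k - c i) * pd j u y * pd i (pd k u) y + (c j - c k) * pd i u y * pd j (pd k u) y) y = ?D"
    apply (rule pd_eqI)
    apply (rule derivative_eq_intros line_derivatives | simp)+
    by (simp add: algebra_simps pd_swap(1)[of j i] pd_swap(2)[of j i k])
  then show ?thesis
    unfolding three_term pd_const by simp
qed

lemma three_term_pd_ij:
  "(c i - c j) * (pd i (pd j (pd k u)) y * pd i (pd j u) y + pd i (pd k u) y * pd j (pd i (pd j u)) y
      + pd j (pd k u) y * pd i (pd i (pd j u)) y + pd k u y * pd j (pd i (pd i (pd j u))) y)
 + (c k - c i) * (pd j (pd i (pd j u)) y * pd i (pd k u) y + pd i (pd j u) y * pd i (pd j (pd k u)) y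
      + pd j (pd j u) y * pd i (pd i (pd k u)) y + pd j u y * pd i (pd i (pd j (pd k u))) y)
 + (c j - c k) * (pd i (pd i (pd j u)) y * pd j (pd k u) y + pd i (pd i u) y * pd j (pd j (pd k u)) y
      + pd i (pd j u) y * pd i (pd j (pd k u)) y + pd i u y * pd j (pd i (pd j (pd k u))) y) = 0"
  (is "?D = 0")
proof -
  have "pd j (\<lambda>y. (c i - c j) * (pd i (pd k u) y * pd i (pd j u) y + pd k u y * pd i (pd i (pd j u)) y)
      + (c k - c i) * (pd i (pd j u) y * pd i (pd k u) y + pd j u y * pd i (pd i (pd k u)) y)
      + (c j - c k) * (pd i (pd i u) y * pd j (pd k u) y + pd i u y * pd i (pd j (pd k u)) y)) y = ?D"
    apply (rule pd_eqI)
    apply (rule derivative_eq_intros line_derivatives | simp)+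
    by (simp add: algebra_simps pd_swap(1)[of j i] pd_swap(2)[of j i k] pd_swap(2)[of j i i]
        pd_swap(3)[of j i i k] pd_swap(3)[of j i i j])
  then show ?thesis
    unfolding three_term_pd_i pd_const by simp
qed

lemma third_derivative_pd_i:
  "pd i (pd i (pd j (pd k u))) y = 1/2 *
    ((pd i (pd i (pd j u)) y * pd i (pd k u) y + pd i (pd j u) y * pd i (pd i (pd k u)) y) / pd i u y
   - pd i (pd j u) y * pd i (pd k u) y * pd i (pd i u) y / (pd i u y)^2
   + (pd i (pd i (pd j u)) y * pd j (pd k u) y + pd i (pd j u) y * pd i (pd j (pd k u)) y) / pd j u y
   - pd i (pd j u) y * pd j (pd k u) y * pd i (pd j u) y / (pd j u y)^2
   + (pd i (pd i (pd k u)) y * pd j (pd k u) y + pd i (pd k u) y * pd i (pd j (pd k u)) y) / pd k u y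
   - pd i (pd k u) y * pd j (pd k u) y * pd i (pd k u) y / (pd k u y)^2)"
  apply (subst (1) third_derivative[abs_def])
  apply (rule pd_eqI)
  apply (rule derivative_eq_intros line_derivatives | simp add: nonzero)+
  using nonzero by (simp add: field_simps power2_eq_square)

lemma third_derivative_pd_j:
  "pd j (pd i (pd j (pd k u))) y = 1/2 *
    ((pd j (pd i (pd j u)) y * pd i (pd k u) y + pd i (pd j u) y * pd i (pd j (pd k u)) y) / pd i u y
   - pd i (pd j u) y * pd i (pd k u) y * pd i (pd j u) y / (pd i u y)^2
   + (pd j (pd i (pd j u)) y * pd j (pd k u) y + pd i (pd j u) y * pd j (pd j (pd k u)) y) / pd j u y
   - pd i (pd j u) y * pd j (pd k u) y * pd j (pd j u) y / (pd j u y)^2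
   + (pd i (pd j (pd k u)) y * pd j (pd k u) y + pd i (pd k u) y * pd j (pd j (pd k u)) y) / pd k u y
   - pd i (pd k u) y * pd j (pd k u) y * pd j (pd k u) y / (pd k u y)^2)"
  apply (subst (1) third_derivative[abs_def])
  apply (rule pd_eqI)
  apply (rule derivative_eq_intros line_derivatives | simp add: nonzero)+
  using nonzero by (simp add: field_simps power2_eq_square pd_swap(1)[of j i] pd_swap(2)[of j i k])

lemma mixed_fourth_derivative:
  "pd j (pd i (pd i (pd j u))) y =
     (pd i (pd j u) y / pd i u y + pd j (pd j u) y / pd j u y) * pd i (pd i (pd j u)) y
   + (pd i (pd j u) y / pd j u y + pd i (pd i u) y / pd i u y) * pd j (pd i (pd j u)) y
   - (pd i (pd j u) y)^2 * pd i (pd i u) y / (pd i u y)^2 - (pd i (pd j u) y)^2 * pd j (pd j u) y / (pd j u y)^2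
   - pd i (pd j u) y * pd i (pd i u) y * pd j (pd j u) y / (pd i u y * pd j u y)"
  by (rule fourth_order_elimination[OF nonzero c_ij three_term three_term_pd_i three_term_pd_j
        third_derivative third_derivative_pd_i third_derivative_pd_j three_term_pd_ij])

lemma planar_equation:
  "pd i (\<lambda>y. (pd i (pd j u) y)\<^sup>2 / ((pd i u y)\<^sup>2 * pd j u y)) x
 + pd j (\<lambda>y. (pd i (pd j u) y)\<^sup>2 / (pd i u y * (pd j u y)\<^sup>2)) x
 + pd i (pd j (\<lambda>y. 2 * pd i (pd j u) y / (pd i u y * pd j u y))) x = 0"
proof -
  have flux_i: "pd i (\<lambda>y. (pd i (pd j u) y)\<^sup>2 / ((pd i u y)\<^sup>2 * pd j u y)) x =
      2 * pd i (pd j u) x * pd i (pd i (pd j u)) x / ((pd i u x)^2 * pd j u x)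
    - 2 * (pd i (pd j u) x)^2 * pd i (pd i u) x / ((pd i u x)^3 * pd j u x)
    - (pd i (pd j u) x)^3 / ((pd i u x)^2 * (pd j u x)^2)"
    apply (rule pd_eqI)
    apply (rule derivative_eq_intros line_derivatives | simp add: nonzero)+
    using nonzero by (simp add: field_simps power2_eq_square power3_eq_cube)
  have flux_j: "pd j (\<lambda>y. (pd i (pd j u) y)\<^sup>2 / (pd i u y * (pd j u y)\<^sup>2)) x =
      2 * pd i (pd j u) x * pd j (pd i (pd j u)) x / (pd i u x * (pd j u x)^2)
    - (pd i (pd j u) x)^3 / ((pd i u x)^2 * (pd j u x)^2)
    - 2 * (pd i (pd j u) x)^2 * pd j (pd j u) x / (pd i u x * (pd j u x)^3)"
    apply (rule pd_eqI)
    apply (rule derivative_eq_intros line_derivatives | simp add: nonzero)+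
    using nonzero by (simp add: field_simps power2_eq_square power3_eq_cube pd_swap(1)[of j i])
  have flux_mixed_j: "pd j (\<lambda>y. 2 * pd i (pd j u) y / (pd i u y * pd j u y)) = (\<lambda>y.
      2 * (pd j (pd i (pd j u)) y / (pd i u y * pd j u y) - (pd i (pd j u) y)^2 / ((pd i u y)^2 * pd j u y)
        - pd i (pd j u) y * pd j (pd j u) y / (pd i u y * (pd j u y)^2)))"
  proof
    fix y
    show "pd j (\<lambda>y. 2 * pd i (pd j u) y / (pd i u y * pd j u y)) y =
      2 * (pd j (pd i (pd j u)) y / (pd i u y * pd j u y) - (pd i (pd j u) y)^2 / ((pd i u y)^2 * pd j u y)
        - pd i (pd j u) y * pd j (pd j u) y / (pd i u y * (pd j u y)^2))"
      apply (rule pd_eqI)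
      apply (rule derivative_eq_intros line_derivatives | simp add: nonzero)+
      using nonzero by (simp add: field_simps power2_eq_square pd_swap(1)[of j i])
  qed
  have flux_mixed: "pd i (pd j (\<lambda>y. 2 * pd i (pd j u) y / (pd i u y * pd j u y))) x =
      2 * (pd j (pd i (pd i (pd j u))) x / (pd i u x * pd j u x)
        - pd j (pd i (pd j u)) x * pd i (pd i u) x / ((pd i u x)^2 * pd j u x)
        - pd j (pd i (pd j u)) x * pd i (pd j u) x / (pd i u x * (pd j u x)^2)
        - 2 * pd i (pd j u) x * pd i (pd i (pd j u)) x / ((pd i u x)^2 * pd j u x)
        + 2 * (pd i (pd j u) x)^2 * pd i (pd i u) x / ((pd i u x)^3 * pd j u x)
        + (pd i (pd j u) x)^3 / ((pd i u x)^2 * (pd j u x)^2)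
        - (pd i (pd i (pd j u)) x * pd j (pd j u) x + pd i (pd j u) x * pd j (pd i (pd j u)) x)
            / (pd i u x * (pd j u x)^2)
        + pd i (pd j u) x * pd j (pd j u) x * pd i (pd i u) x / ((pd i u x)^2 * (pd j u x)^2)
        + 2 * (pd i (pd j u) x)^2 * pd j (pd j u) x / (pd i u x * (pd j u x)^3))"
    unfolding flux_mixed_j
    apply (rule pd_eqI)
    apply (rule derivative_eq_intros line_derivatives | simp add: nonzero)+
    using nonzero by (simp add: field_simps power2_eq_square power3_eq_cube
        pd_swap(2)[of i j j] pd_swap(3)[of i j i j])
  show ?thesis
    unfolding flux_i flux_j flux_mixed mixed_fourth_derivative
    using nonzero by (simp add: field_simps power2_eq_square power3_eq_cube)
qed

end

theorem lemmaA2: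
  fixes u :: "real^'n \<Rightarrow> real" and c :: "'n \<Rightarrow> real"
  assumes n3: "CARD('n) \<ge> 3"
    and distinct_c: "inj c"
    and smooth_u: "smooth u"
    and nonzero: "\<forall>i x. pd i u x \<noteq> 0"
    and eq1: "\<forall>i j k x. i \<noteq> j \<and> i \<noteq> k \<and> j \<noteq> k \<longrightarrow>
        (c i - c j) * pd k u x * pd i (pd j u) x
      + (c k - c i) * pd j u x * pd i (pd k u) x
      + (c j - c k) * pd i u x * pd j (pd k u) x = 0"
    and eq2: "\<forall>i j k x. i \<noteq> j \<and> i \<noteq> k \<and> j \<noteq> k \<longrightarrow>
        pd i (pd j (pd k u)) x = 1/2 *
          (pd i (pd j u) x * pd i (pd k u) x / pd i u x
         + pd i (pd j u) x * pd j (pd k u) x / pd j u x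
         + pd i (pd k u) x * pd j (pd k u) x / pd k u x)"
  shows "\<forall>i j x. i \<noteq> j \<longrightarrow>
      pd i (\<lambda>y. (pd i (pd j u) y)\<^sup>2 / ((pd i u y)\<^sup>2 * pd j u y)) x
    + pd j (\<lambda>y. (pd i (pd j u) y)\<^sup>2 / (pd i u y * (pd j u y)\<^sup>2)) x
    + pd i (pd j (\<lambda>y. 2 * pd i (pd j u) y / (pd i u y * pd j u y))) x = 0"
proof (intro allI impI)
  fix i j :: 'n and x :: "real^'n"
  assume ij: "i \<noteq> j"
  have "card {i, j} \<le> 2"
    by (simp add: card_insert_if)
  with n3 have "{i, j} \<noteq> UNIV"
    by auto
  then obtain k where k: "k \<noteq> i" "k \<noteq> j"
    by blast
  interpret planar_triple u c i j k
    using smooth_u nonzero eq1 eq2 ij k inj_eq[OF distinct_c]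
    by unfold_locales auto
  show "pd i (\<lambda>y. (pd i (pd j u) y)\<^sup>2 / ((pd i u y)\<^sup>2 * pd j u y)) x
    + pd j (\<lambda>y. (pd i (pd j u) y)\<^sup>2 / (pd i u y * (pd j u y)\<^sup>2)) x
    + pd i (pd j (\<lambda>y. 2 * pd i (pd j u) y / (pd i u y * pd j u y))) x = 0"
    by (rule planar_equation)
qed

end
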